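(* Let $\Sigma$ be a finite alphabet. (1) For any $\lambda\in[0,1]$ there is a quantum automaton $\mathcal{A}$ over $\Sigma$ such that $f^{\mathrm{ND}}_{\mathcal{A}}(w)=\lambda$ for all $w\in\Sigma^\omega$. (2) For any quantum automaton $\mathcal{A}$ over $\Sigma$ and $\lambda\in[0,1]$ there is a quantum automaton $\mathcal{B}$ over $\Sigma$ with $f^{\mathrm{ND}}_{\mathcal{B}}(w)=\lambda f^{\mathrm{ND}}_{\mathcal{A}}(w)$ for all $w\in\Sigma^\omega$. (3) For any quantum automaton $\mathcal{A}$ over $\Sigma$ and $\lambda\in[0,1]$ there is a quantum automaton $\mathcal{B}$ over $\Sigma$ with $f^{\mathrm{ND}}_{\mathcal{B}}(w)=\lambda f^{\mathrm{ND}}_{\mathcal{A}}(w)+(1-\lambda)$ for all $w\in\Sigma^\omega$.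
   Context: A quantum automaton is a tuple $\mathcal{A}=(\mathcal{H},|s_0\rangle,\Sigma,\{U_\sigma:\sigma\in\Sigma\},F)$ where $\mathcal{H}$ is a finite-dimensional complex Hilbert space, $|s_0\rangle$ a unit vector, $\Sigma$ a finite alphabet, each $U_\sigma$ unitary, and $F$ a subspace. For $w=\sigma_1\sigma_2\cdots\in\Sigma^\omega$ the non-disturbing run is $|s_n\rangle=U_{\sigma_n}\cdots U_{\sigma_1}|s_0\rangle$ and $f^{\mathrm{ND}}_{\mathcal{A}}(w)=\sup_{|\psi\rangle}\sup_{\{n_i\}}\inf_{i\ge1}|\langle\psi|s_{n_i}\rangle|^2$ over unit $|\psi\rangle\in F$ and strictly increasing sequences $0\le n_1<n_2<\cdots$. *)

theory Defs
  imports "Jordan_Normal_Form.Schur_Decomposition"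
begin

record 'a qaut =
  qa_dim   :: nat
  qa_init  :: "complex vec"
  qa_trans :: "'a \<Rightarrow> complex mat"
  qa_acc   :: "complex vec set"

definition inner :: "complex vec \<Rightarrow> complex vec \<Rightarrow> complex" where
  "inner \<psi> s = (\<Sum>i<dim_vec s. cnj (\<psi> $ i) * s $ i)"

definition unitary_mat :: "nat \<Rightarrow> complex mat \<Rightarrow> bool" where
  "unitary_mat n U \<longleftrightarrow> U \<in> carrier_mat n n \<and> mat_adjoint U * U = 1\<^sub>m n \<and> U * mat_adjoint U = 1\<^sub>m n"

definition is_subspace :: "nat \<Rightarrow> complex vec set \<Rightarrow> bool" where
  "is_subspace n F \<longleftrightarrow> F \<subseteq> carrier_vec n \<and> 0\<^sub>v n \<in> F \<and>
     (\<forall>x\<in>F. \<forall>y\<in>F. x + y \<in> F) \<and> (\<forall>c. \<forall>x\<in>F. c \<cdot>\<^sub>v x \<in> F)"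

definition qaut_wf :: "'a qaut \<Rightarrow> bool" where
  "qaut_wf A \<longleftrightarrow> qa_init A \<in> carrier_vec (qa_dim A) \<and> inner (qa_init A) (qa_init A) = 1 \<and>
     (\<forall>\<sigma>. unitary_mat (qa_dim A) (qa_trans A \<sigma>)) \<and> is_subspace (qa_dim A) (qa_acc A)"

text \<open>Non-disturbing run: s 0 = s0, s (k+1) = U_(w k) s k (letters sigma_1 = w 0, ...).\<close>
fun qa_run :: "'a qaut \<Rightarrow> (nat \<Rightarrow> 'a) \<Rightarrow> nat \<Rightarrow> complex vec" where
  "qa_run A w 0 = qa_init A"
| "qa_run A w (Suc k) = qa_trans A (w k) *\<^sub>v qa_run A w k"

definition fND_set :: "'a qaut \<Rightarrow> (nat \<Rightarrow> 'a) \<Rightarrow> real set" where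
  "fND_set A w = {(INF i::nat. (cmod (inner \<psi> (qa_run A w (ns i))))\<^sup>2) | \<psi> ns.
      \<psi> \<in> qa_acc A \<and> inner \<psi> \<psi> = 1 \<and> strict_mono ns}"

text \<open>Supremum; by convention 0 when F = {0} (no unit vector, empty supremum).\<close>
definition fND :: "'a qaut \<Rightarrow> (nat \<Rightarrow> 'a) \<Rightarrow> real" where
  "fND A w = (if fND_set A w = {} then 0 else Sup (fND_set A w))"

end

theory Submission
  imports Defs "HOL-Analysis.Convex" "HOL-Analysis.Topology_Euclidean_Space"
begin

(*
  Each construction pads A, acting on C^n, to an automaton B on the direct sum C^n (+) C: the
  initial state is sqrt l s0 (+) sqrt (1 - l), and every letter acts as U_sigma (+) 1, so the run
  of B is sqrt l s_k (+) sqrt (1 - l).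

  With accepting space F (+) 0 every overlap |<psi|s_k>|^2 is multiplied by l; this gives (2),
  and (1) is (2) applied to a one-dimensional automaton of constant value 1.

  With accepting space F (+) C, a unit vector whose F-component is a nonzero multiple of a unit
  vector phi of F has, by Cauchy-Schwarz in C^2, overlaps at most l |<phi|s_k>|^2 + (1 - l); this
  is the upper bound in (3). For the lower bound, given phi and a subsequence n_i, pass to a
  further subsequence along which <phi|s_(n_i)> converges to some L. The unit vector proportional
  to sqrt l L phi (+) sqrt (1 - l) attains equality in the limit: its overlaps tend to
  l |L|^2 + (1 - l) >= l inf_i |<phi|s_(n_i)>|^2 + (1 - l), so a tail of the subsequence comes
  within any epsilon of the bound.
*)

hide_const (open) Inner_Product.inner
hide_type (open) Finite_Cartesian_Product.vec
hide_const (open) Finite_Cartesian_Product.vec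

section \<open>Complex vectors and unitary matrices\<close>

definition sq_norm_vec :: "complex vec \<Rightarrow> real" where
  "sq_norm_vec x = (\<Sum>i<dim_vec x. (cmod (x $ i))\<^sup>2)"

lemma inner_self_eq_sq_norm_vec: "inner x x = of_real (sq_norm_vec x)"
  unfolding inner_def sq_norm_vec_def of_real_sum
  by (intro sum.cong refl) (simp add: complex_norm_square mult.commute flip: of_real_power)

lemma inner_self_eq_1_iff: "inner x x = 1 \<longleftrightarrow> sq_norm_vec x = 1"
  by (metis inner_self_eq_sq_norm_vec of_real_eq_1_iff)

lemma sq_norm_vec_nonneg: "0 \<le> sq_norm_vec x"
  unfolding sq_norm_vec_def by (simp add: sum_nonneg)

lemma sq_norm_vec_eq_0D: "sq_norm_vec x = 0 \<Longrightarrow> x = 0\<^sub>v (dim_vec x)"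
  unfolding sq_norm_vec_def by (intro eq_vecI) (auto simp: sum_nonneg_eq_0_iff)

lemma sq_norm_vec_smult: "sq_norm_vec (c \<cdot>\<^sub>v x) = (cmod c)\<^sup>2 * sq_norm_vec x"
  unfolding sq_norm_vec_def by (simp add: norm_mult power_mult_distrib sum_distrib_left)

lemma sq_norm_vec_const: "sq_norm_vec (vec n (\<lambda>_. c)) = of_nat n * (cmod c)\<^sup>2"
  unfolding sq_norm_vec_def by simp

lemma cmod_inner_squared_le:
  assumes "dim_vec x = dim_vec y"
  shows "(cmod (inner x y))\<^sup>2 \<le> sq_norm_vec x * sq_norm_vec y"
proof -
  have "cmod (inner x y) \<le> (\<Sum>i<dim_vec y. cmod (x $ i) * cmod (y $ i))"
    unfolding inner_def by (rule order_trans[OF norm_sum]) (simp add: norm_mult)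
  then have "(cmod (inner x y))\<^sup>2 \<le> (\<Sum>i<dim_vec y. cmod (x $ i) * cmod (y $ i))\<^sup>2"
    by (simp add: power_mono)
  also have "\<dots> \<le> sq_norm_vec x * sq_norm_vec y"
    unfolding sq_norm_vec_def assms by (rule Cauchy_Schwarz_ineq_sum)
  finally show ?thesis .
qed

lemma cmod_add_mult_squared_le:
  fixes a b z u :: complex
  shows "(cmod (a * z + b * u))\<^sup>2 \<le> ((cmod a)\<^sup>2 + (cmod b)\<^sup>2) * ((cmod z)\<^sup>2 + (cmod u)\<^sup>2)"
proof -
  have "cmod (a * z + b * u) \<le> cmod a * cmod z + cmod b * cmod u"
    by (metis norm_mult norm_triangle_ineq)
  then have "(cmod (a * z + b * u))\<^sup>2 \<le> (cmod a * cmod z + cmod b * cmod u)\<^sup>2"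
    by (simp add: power_mono)
  also have "\<dots> \<le> ((cmod a)\<^sup>2 + (cmod b)\<^sup>2) * ((cmod z)\<^sup>2 + (cmod u)\<^sup>2)"
    using zero_le_power2[of "cmod a * cmod u - cmod b * cmod z"]
    by (simp add: power2_eq_square algebra_simps)
  finally show ?thesis .
qed

lemma inner_smult_left: "dim_vec x = dim_vec y \<Longrightarrow> inner (c \<cdot>\<^sub>v x) y = cnj c * inner x y"
  unfolding inner_def by (simp add: sum_distrib_left mult.assoc)

lemma inner_smult_right: "inner x (c \<cdot>\<^sub>v y) = c * inner x y"
  unfolding inner_def by (simp add: sum_distrib_left algebra_simps)

lemma inner_zero_left: "y \<in> carrier_vec n \<Longrightarrow> inner (0\<^sub>v n) y = 0"
  unfolding inner_def by simp

lemma inner_append_vec: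
  assumes "dim_vec x = dim_vec y" "dim_vec x' = dim_vec y'"
  shows "inner (x @\<^sub>v x') (y @\<^sub>v y') = inner x y + inner x' y'"
proof -
  have split: "(\<Sum>i<a + b. f i) = (\<Sum>i<a. f i) + (\<Sum>i<b. f (a + i))" for a b and f :: "nat \<Rightarrow> complex"
    by (induction b) (simp_all add: add.assoc)
  show ?thesis
    unfolding inner_def index_append_vec(2) split using assms by simp
qed

lemma sq_norm_vec_append_vec: "sq_norm_vec (x @\<^sub>v y) = sq_norm_vec x + sq_norm_vec y"
  using inner_append_vec[of x x y y] by (simp add: inner_self_eq_sq_norm_vec flip: of_real_add)

lemma smult_append_vec: "c \<cdot>\<^sub>v (x @\<^sub>v y) = (c \<cdot>\<^sub>v x) @\<^sub>v (c \<cdot>\<^sub>v y)"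
  by (rule eq_vecI) auto

lemma zero_append_vec: "0\<^sub>v n @\<^sub>v 0\<^sub>v m = 0\<^sub>v (n + m)"
  by (rule eq_vecI) auto

lemma is_subspace_zero: "is_subspace n {0\<^sub>v n}"
  unfolding is_subspace_def by auto

lemma is_subspace_carrier: "is_subspace n (carrier_vec n)"
  unfolding is_subspace_def by auto

lemma is_subspace_direct_sum:
  assumes F: "is_subspace n F" and E: "is_subspace m E"
  shows "is_subspace (n + m) {\<psi> @\<^sub>v d | \<psi> d. \<psi> \<in> F \<and> d \<in> E}" (is "is_subspace _ ?G")
  unfolding is_subspace_def
proof (intro conjI ballI allI subsetI)
  fix x assume "x \<in> ?G"
  then show "x \<in> carrier_vec (n + m)"
    using F E unfolding is_subspace_def by blast
next
  show "0\<^sub>v (n + m) \<in> ?G"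
    using F E unfolding is_subspace_def zero_append_vec[symmetric] by blast
next
  fix x y assume "x \<in> ?G" "y \<in> ?G"
  then obtain \<psi> d \<psi>' d' where x: "x = \<psi> @\<^sub>v d" and y: "y = \<psi>' @\<^sub>v d'"
    and mem: "\<psi> \<in> F" "d \<in> E" "\<psi>' \<in> F" "d' \<in> E"
    by blast
  have "x + y = (\<psi> + \<psi>') @\<^sub>v (d + d')"
    unfolding x y using mem F E unfolding is_subspace_def by (intro append_vec_add) auto
  then show "x + y \<in> ?G"
    using mem F E unfolding is_subspace_def by blast
next
  fix c x assume "x \<in> ?G"
  then obtain \<psi> d where x: "x = \<psi> @\<^sub>v d" and mem: "\<psi> \<in> F" "d \<in> E"
    by blast
  have "c \<cdot>\<^sub>v x = (c \<cdot>\<^sub>v \<psi>) @\<^sub>v (c \<cdot>\<^sub>v d)"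
    unfolding x by (rule smult_append_vec)
  then show "c \<cdot>\<^sub>v x \<in> ?G"
    using mem F E unfolding is_subspace_def by blast
qed

lemma mat_adjoint_dim [simp]:
  "dim_row (mat_adjoint A) = dim_col A" "dim_col (mat_adjoint A) = dim_row A"
  unfolding mat_adjoint_def by simp_all

lemma mat_adjoint_carrier: "A \<in> carrier_mat n m \<Longrightarrow> mat_adjoint A \<in> carrier_mat m n"
  by auto

lemma mat_adjoint_index [simp]:
  "i < dim_col A \<Longrightarrow> j < dim_row A \<Longrightarrow> mat_adjoint A $$ (i, j) = conjugate (A $$ (j, i))"
  unfolding mat_adjoint_def by (simp add: mat_of_rows_index)

lemma inner_mult_mat_vec:
  assumes A: "A \<in> carrier_mat n m" and x: "x \<in> carrier_vec n" and y: "y \<in> carrier_vec m"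
  shows "inner x (A *\<^sub>v y) = inner (mat_adjoint A *\<^sub>v x) y"
proof -
  have "inner x (A *\<^sub>v y) = (\<Sum>i<n. \<Sum>j<m. cnj (x $ i) * A $$ (i, j) * y $ j)"
    unfolding inner_def using A y by (simp add: scalar_prod_def lessThan_atLeast0 sum_distrib_left mult.assoc)
  also have "\<dots> = (\<Sum>j<m. \<Sum>i<n. cnj (x $ i) * A $$ (i, j) * y $ j)"
    by (rule sum.swap)
  also have "\<dots> = inner (mat_adjoint A *\<^sub>v x) y"
    unfolding inner_def using A x y mat_adjoint_carrier[OF A]
    by (simp add: scalar_prod_def lessThan_atLeast0 sum_distrib_left mult.commute)
  finally show ?thesis .
qed

lemma unitary_mat_carrier: "unitary_mat n U \<Longrightarrow> U \<in> carrier_mat n n"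
  unfolding unitary_mat_def by simp

lemma unitary_mat_inner:
  assumes U: "unitary_mat n U" and x: "x \<in> carrier_vec n" and y: "y \<in> carrier_vec n"
  shows "inner (U *\<^sub>v x) (U *\<^sub>v y) = inner x y"
proof -
  have Uc: "U \<in> carrier_mat n n" and UU: "mat_adjoint U * U = 1\<^sub>m n"
    using U unfolding unitary_mat_def by auto
  have "inner (U *\<^sub>v x) (U *\<^sub>v y) = inner (mat_adjoint U *\<^sub>v (U *\<^sub>v x)) y"
    using Uc x y by (intro inner_mult_mat_vec) auto
  also have "\<dots> = inner ((mat_adjoint U * U) *\<^sub>v x) y"
    using Uc x mat_adjoint_carrier[OF Uc] by (simp add: assoc_mult_mat_vec)
  finally show ?thesis
    using UU x by simp
qed

lemma mat_adjoint_four_block_mat: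
  assumes "A \<in> carrier_mat n1 m1" "B \<in> carrier_mat n1 m2" "C \<in> carrier_mat n2 m1" "D \<in> carrier_mat n2 m2"
  shows "mat_adjoint (four_block_mat A B C D) =
    four_block_mat (mat_adjoint A) (mat_adjoint C) (mat_adjoint B) (mat_adjoint D)"
  using assms by (intro eq_matI) auto

lemma mat_adjoint_zero: "mat_adjoint (0\<^sub>m n m) = 0\<^sub>m m n"
  by (intro eq_matI) auto

lemma mat_adjoint_one: "mat_adjoint (1\<^sub>m n :: complex mat) = 1\<^sub>m n"
  by (intro eq_matI) auto

lemma unitary_mat_one: "unitary_mat n (1\<^sub>m n)"
  unfolding unitary_mat_def by (simp add: mat_adjoint_one)

lemma unitary_mat_four_block_diag:
  assumes U: "unitary_mat n U" and V: "unitary_mat m V"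
  shows "unitary_mat (n + m) (four_block_mat U (0\<^sub>m n m) (0\<^sub>m m n) V)"
proof -
  have Uc: "U \<in> carrier_mat n n" and Vc: "V \<in> carrier_mat m m"
    using U V by (simp_all add: unitary_mat_carrier)
  have U': "mat_adjoint U \<in> carrier_mat n n" and V': "mat_adjoint V \<in> carrier_mat m m"
    using Uc Vc by (simp_all add: mat_adjoint_carrier)
  have adj: "mat_adjoint (four_block_mat U (0\<^sub>m n m) (0\<^sub>m m n) V) =
      four_block_mat (mat_adjoint U) (0\<^sub>m n m) (0\<^sub>m m n) (mat_adjoint V)"
    using mat_adjoint_four_block_mat[OF Uc zero_carrier_mat zero_carrier_mat Vc]
    by (simp add: mat_adjoint_zero)
  show ?thesis
    using U V Uc Vc U' V' unfolding unitary_mat_def adj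
    by (simp add: mult_four_block_mat[OF U' _ _ V' Uc _ _ Vc] mult_four_block_mat[OF Uc _ _ Vc U' _ _ V'])
qed

section \<open>Infima, suprema and convergent subsequences\<close>

lemma cINF_affine:
  fixes f :: "'b \<Rightarrow> real"
  assumes "0 \<le> a" "I \<noteq> {}" "bdd_below (f ` I)"
  shows "(INF i\<in>I. a * f i + b) = a * (INF i\<in>I. f i) + b"
proof -
  have "a * Inf (f ` I) + b = Inf ((\<lambda>x. a * x + b) ` f ` I)"
    using assms by (intro continuous_at_Inf_mono) (auto intro!: monoI mult_left_mono continuous_intros)
  then show ?thesis
    by (simp add: image_image)
qed

lemma cSup_mult_left:
  fixes S :: "real set"
  assumes "0 \<le> a" "S \<noteq> {}" "bdd_above S"
  shows "Sup ((\<lambda>x. a * x) ` S) = a * Sup S"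
  using assms
  by (intro continuous_at_Sup_mono[symmetric]) (auto intro!: monoI mult_left_mono continuous_intros)

lemma tendsto_imp_INF_shift_ge:
  fixes f :: "nat \<Rightarrow> real"
  assumes "f \<longlonglongrightarrow> M" "y < M"
  obtains J where "y \<le> (INF j. f (j + J))"
proof -
  obtain J where "\<And>j. j \<ge> J \<Longrightarrow> y < f j"
    using order_tendstoD(1)[OF assms] unfolding eventually_sequentially by blast
  then show thesis
    by (intro that[of J] cINF_greatest) (auto intro: less_imp_le)
qed

lemma bounded_convergent_subseq_INF_le:
  fixes z :: "nat \<Rightarrow> complex"
  assumes "bounded (range z)"
  obtains L r where "strict_mono r" "(z \<circ> r) \<longlonglongrightarrow> L" "(INF i. (cmod (z i))\<^sup>2) \<le> (cmod L)\<^sup>2"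
proof -
  obtain L r where r: "strict_mono r" and lim: "(z \<circ> r) \<longlonglongrightarrow> L"
    using bounded_imp_convergent_subsequence[OF assms] by blast
  have "(INF i. (cmod (z i))\<^sup>2) \<le> (cmod (z (r j)))\<^sup>2" for j
    by (rule cINF_lower) (auto intro: bdd_belowI[of _ 0])
  moreover have "(\<lambda>j. (cmod (z (r j)))\<^sup>2) \<longlonglongrightarrow> (cmod L)\<^sup>2"
    using lim unfolding comp_def by (intro tendsto_intros)
  ultimately have "(INF i. (cmod (z i))\<^sup>2) \<le> (cmod L)\<^sup>2"
    by (intro LIMSEQ_le_const) auto
  then show thesis
    using that r lim by blast
qed

section \<open>The non-disturbing value\<close>

lemma qaut_wf_unitary: "qaut_wf A \<Longrightarrow> unitary_mat (qa_dim A) (qa_trans A \<sigma>)"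
  unfolding qaut_wf_def by simp

lemma qa_acc_carrier: "qaut_wf A \<Longrightarrow> \<psi> \<in> qa_acc A \<Longrightarrow> \<psi> \<in> carrier_vec (qa_dim A)"
  unfolding qaut_wf_def is_subspace_def by blast

lemma qa_run_carrier:
  assumes "qaut_wf A"
  shows "qa_run A w k \<in> carrier_vec (qa_dim A)"
proof (induction k)
  case (Suc k)
  show ?case
    using mult_mat_vec_carrier[OF unitary_mat_carrier[OF qaut_wf_unitary[OF assms]] Suc.IH] by simp
qed (use assms in \<open>simp add: qaut_wf_def\<close>)

lemma qa_run_unit:
  assumes "qaut_wf A"
  shows "inner (qa_run A w k) (qa_run A w k) = 1"
proof (induction k)
  case (Suc k)
  show ?case
    using unitary_mat_inner[OF qaut_wf_unitary[OF assms] qa_run_carrier[OF assms] qa_run_carrier[OF assms]]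
      Suc.IH by simp
qed (use assms in \<open>simp add: qaut_wf_def\<close>)

lemma dim_vec_qa_acc_eq_qa_run:
  "qaut_wf A \<Longrightarrow> \<psi> \<in> qa_acc A \<Longrightarrow> dim_vec \<psi> = dim_vec (qa_run A w k)"
  using qa_acc_carrier qa_run_carrier by (metis carrier_vecD)

lemma cmod_inner_qa_run_le_1:
  assumes "qaut_wf A" "\<psi> \<in> qa_acc A" "inner \<psi> \<psi> = 1"
  shows "(cmod (inner \<psi> (qa_run A w k)))\<^sup>2 \<le> 1"
  using cmod_inner_squared_le[OF dim_vec_qa_acc_eq_qa_run[OF assms(1,2)]] assms(3) qa_run_unit[OF assms(1)]
  by (simp add: inner_self_eq_1_iff)

lemma bdd_below_cmod_squared: "bdd_below (range (\<lambda>i. (cmod (f i))\<^sup>2))"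
  by (rule bdd_belowI[of _ 0]) auto

lemma fND_setI:
  "\<psi> \<in> qa_acc A \<Longrightarrow> inner \<psi> \<psi> = 1 \<Longrightarrow> strict_mono ns \<Longrightarrow>
    (INF i::nat. (cmod (inner \<psi> (qa_run A w (ns i))))\<^sup>2) \<in> fND_set A w"
  unfolding fND_set_def by blast

lemma fND_setE:
  assumes "x \<in> fND_set A w"
  obtains \<psi> ns where "x = (INF i::nat. (cmod (inner \<psi> (qa_run A w (ns i))))\<^sup>2)"
    "\<psi> \<in> qa_acc A" "inner \<psi> \<psi> = 1" "strict_mono ns"
  using assms unfolding fND_set_def by blast

lemma fND_set_bounds:
  assumes "qaut_wf A" "x \<in> fND_set A w"
  shows "0 \<le> x" "x \<le> 1"
proof -
  obtain \<psi> ns where x: "x = (INF i::nat. (cmod (inner \<psi> (qa_run A w (ns i))))\<^sup>2)"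
    and \<psi>: "\<psi> \<in> qa_acc A" "inner \<psi> \<psi> = 1"
    using assms(2) by (rule fND_setE)
  show "0 \<le> x"
    unfolding x by (rule cINF_greatest) auto
  have "x \<le> (cmod (inner \<psi> (qa_run A w (ns 0))))\<^sup>2"
    unfolding x by (rule cINF_lower[OF bdd_below_cmod_squared]) simp
  also have "\<dots> \<le> 1"
    by (rule cmod_inner_qa_run_le_1[OF assms(1) \<psi>])
  finally show "x \<le> 1" .
qed

lemma bdd_above_fND_set: "qaut_wf A \<Longrightarrow> bdd_above (fND_set A w)"
  using fND_set_bounds by (intro bdd_aboveI[of _ 1]) blast

lemma fND_upper: "qaut_wf A \<Longrightarrow> x \<in> fND_set A w \<Longrightarrow> x \<le> fND A w"
  unfolding fND_def using cSup_upper[OF _ bdd_above_fND_set] by auto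

lemma fND_least: "0 \<le> b \<Longrightarrow> (\<And>x. x \<in> fND_set A w \<Longrightarrow> x \<le> b) \<Longrightarrow> fND A w \<le> b"
  unfolding fND_def by (auto intro: cSup_least)

lemma fND_nonneg:
  assumes "qaut_wf A"
  shows "0 \<le> fND A w"
proof (cases "fND_set A w = {}")
  case False
  then obtain x where "x \<in> fND_set A w"
    by blast
  then show ?thesis
    using fND_set_bounds(1)[OF assms] fND_upper[OF assms] by (meson order_trans)
qed (simp add: fND_def)

lemma fND_le_1: "qaut_wf A \<Longrightarrow> fND A w \<le> 1"
  using fND_set_bounds by (intro fND_least) auto

definition qa_trivial :: "'a qaut" where
  "qa_trivial = \<lparr>qa_dim = 1, qa_init = vec 1 (\<lambda>_. 1), qa_trans = (\<lambda>_. 1\<^sub>m 1), qa_acc = carrier_vec 1\<rparr>"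

lemma qaut_wf_qa_trivial: "qaut_wf qa_trivial"
  unfolding qaut_wf_def qa_trivial_def
  by (simp add: inner_def unitary_mat_one is_subspace_carrier)

lemma fND_qa_trivial: "fND qa_trivial w = 1"
proof (rule antisym)
  show "fND qa_trivial w \<le> 1"
    by (rule fND_le_1[OF qaut_wf_qa_trivial])
  have run: "qa_run qa_trivial w k = vec 1 (\<lambda>_. 1)" for k
    by (induction k) (simp_all add: qa_trivial_def)
  have "(INF i::nat. (cmod (inner (vec 1 (\<lambda>_. 1)) (qa_run qa_trivial w (id i))))\<^sup>2) \<in> fND_set qa_trivial w"
    by (rule fND_setI[OF _ _ strict_mono_id]) (simp_all add: qa_trivial_def inner_def)
  then show "1 \<le> fND qa_trivial w"
    using fND_upper[OF qaut_wf_qa_trivial] by (simp add: run inner_def)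
qed

section \<open>Padding an automaton by one dimension\<close>

definition qa_pad :: "'a qaut \<Rightarrow> real \<Rightarrow> complex vec set \<Rightarrow> 'a qaut" where
  "qa_pad A l E = \<lparr>qa_dim = qa_dim A + 1,
     qa_init = (complex_of_real (sqrt l) \<cdot>\<^sub>v qa_init A) @\<^sub>v vec 1 (\<lambda>_. complex_of_real (sqrt (1 - l))),
     qa_trans = (\<lambda>\<sigma>. four_block_mat (qa_trans A \<sigma>) (0\<^sub>m (qa_dim A) 1) (0\<^sub>m 1 (qa_dim A)) (1\<^sub>m 1)),
     qa_acc = {\<psi> @\<^sub>v d | \<psi> d. \<psi> \<in> qa_acc A \<and> d \<in> E}\<rparr>"

lemma qa_pad_simps:
  "qa_dim (qa_pad A l E) = qa_dim A + 1"
  "qa_init (qa_pad A l E) =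
    (complex_of_real (sqrt l) \<cdot>\<^sub>v qa_init A) @\<^sub>v vec 1 (\<lambda>_. complex_of_real (sqrt (1 - l)))"
  "qa_trans (qa_pad A l E) \<sigma> = four_block_mat (qa_trans A \<sigma>) (0\<^sub>m (qa_dim A) 1) (0\<^sub>m 1 (qa_dim A)) (1\<^sub>m 1)"
  "qa_acc (qa_pad A l E) = {\<psi> @\<^sub>v d | \<psi> d. \<psi> \<in> qa_acc A \<and> d \<in> E}"
  by (simp_all add: qa_pad_def)

lemma qaut_wf_qa_pad:
  assumes A: "qaut_wf A" and l: "0 \<le> l" "l \<le> 1" and E: "is_subspace 1 E"
  shows "qaut_wf (qa_pad A l E)"
proof -
  let ?B = "qa_pad A l E"
  have init: "qa_init A \<in> carrier_vec (qa_dim A)" "sq_norm_vec (qa_init A) = 1"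
    using A by (simp_all add: qaut_wf_def inner_self_eq_1_iff)
  then have "qa_init ?B \<in> carrier_vec (qa_dim ?B)"
    unfolding qa_pad_simps by (intro append_carrier_vec) auto
  moreover have "inner (qa_init ?B) (qa_init ?B) = 1"
    using init l unfolding qa_pad_simps
    by (simp add: inner_self_eq_1_iff sq_norm_vec_append_vec sq_norm_vec_smult sq_norm_vec_const)
  moreover have "unitary_mat (qa_dim ?B) (qa_trans ?B \<sigma>)" for \<sigma>
    unfolding qa_pad_simps using qaut_wf_unitary[OF A] unitary_mat_one by (rule unitary_mat_four_block_diag)
  moreover have "is_subspace (qa_dim ?B) (qa_acc ?B)"
    unfolding qa_pad_simps using A E unfolding qaut_wf_def by (intro is_subspace_direct_sum) auto
  ultimately show ?thesis
    unfolding qaut_wf_def by blast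
qed

lemma qa_run_qa_pad:
  assumes A: "qaut_wf A"
  shows "qa_run (qa_pad A l E) w k =
    (complex_of_real (sqrt l) \<cdot>\<^sub>v qa_run A w k) @\<^sub>v vec 1 (\<lambda>_. complex_of_real (sqrt (1 - l)))"
proof (induction k)
  case (Suc k)
  have U: "qa_trans A (w k) \<in> carrier_mat (qa_dim A) (qa_dim A)"
    using unitary_mat_carrier[OF qaut_wf_unitary[OF A]] .
  show ?case
    using Suc.IH qa_run_carrier[OF A]
    by (simp add: qa_pad_def mult_mat_vec_split[OF U] mult_mat_vec[OF U])
qed (simp add: qa_pad_def)

lemma inner_qa_run_qa_pad:
  assumes A: "qaut_wf A" and \<psi>: "\<psi> \<in> carrier_vec (qa_dim A)" and d: "d \<in> carrier_vec 1"
  shows "inner (\<psi> @\<^sub>v d) (qa_run (qa_pad A l E) w k) =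
    complex_of_real (sqrt l) * inner \<psi> (qa_run A w k) + cnj (d $ 0) * complex_of_real (sqrt (1 - l))"
proof -
  have "inner (\<psi> @\<^sub>v d) (qa_run (qa_pad A l E) w k) =
      inner \<psi> (complex_of_real (sqrt l) \<cdot>\<^sub>v qa_run A w k)
      + inner d (vec 1 (\<lambda>_. complex_of_real (sqrt (1 - l))))"
    unfolding qa_run_qa_pad[OF A] using \<psi> d qa_run_carrier[OF A, THEN carrier_vecD]
    by (intro inner_append_vec) auto
  moreover have "inner d (vec 1 (\<lambda>_. complex_of_real (sqrt (1 - l)))) =
      cnj (d $ 0) * complex_of_real (sqrt (1 - l))"
    using d by (simp add: inner_def)
  ultimately show ?thesis
    by (simp add: inner_smult_right)
qed

lemma INF_qa_pad_zero:
  assumes A: "qaut_wf A" and l: "0 \<le> l" and \<psi>: "\<psi> \<in> qa_acc A"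
  shows "(INF i::nat. (cmod (inner (\<psi> @\<^sub>v 0\<^sub>v 1) (qa_run (qa_pad A l {0\<^sub>v 1}) w (ns i))))\<^sup>2) =
    l * (INF i::nat. (cmod (inner \<psi> (qa_run A w (ns i))))\<^sup>2)"
proof -
  have "(cmod (inner (\<psi> @\<^sub>v 0\<^sub>v 1) (qa_run (qa_pad A l {0\<^sub>v 1}) w k)))\<^sup>2 =
      l * (cmod (inner \<psi> (qa_run A w k)))\<^sup>2" for k
    using inner_qa_run_qa_pad[OF A qa_acc_carrier[OF A \<psi>] zero_carrier_vec] l
    by (simp add: norm_mult power_mult_distrib)
  then show ?thesis
    using cINF_affine[where b = 0, OF l UNIV_not_empty bdd_below_cmod_squared] by simp
qed

lemma fND_set_qa_pad_zero:
  assumes A: "qaut_wf A" and l: "0 \<le> l"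
  shows "fND_set (qa_pad A l {0\<^sub>v 1}) w = (\<lambda>x. l * x) ` fND_set A w"
proof -
  let ?B = "qa_pad A l {0\<^sub>v 1}"
  have unit: "inner (\<psi> @\<^sub>v 0\<^sub>v 1) (\<psi> @\<^sub>v 0\<^sub>v 1) = inner \<psi> \<psi>" for \<psi>
    by (simp add: inner_self_eq_sq_norm_vec sq_norm_vec_append_vec sq_norm_vec_def)
  note INF_eq = INF_qa_pad_zero[OF A l]
  show ?thesis
  proof (intro equalityI subsetI)
    fix x assume "x \<in> fND_set ?B w"
    then obtain \<psi>' ns where x: "x = (INF i::nat. (cmod (inner \<psi>' (qa_run ?B w (ns i))))\<^sup>2)"
      and \<psi>': "\<psi>' \<in> qa_acc ?B" "inner \<psi>' \<psi>' = 1" and ns: "strict_mono ns"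
      by (rule fND_setE)
    then obtain \<psi> where \<psi>: "\<psi> \<in> qa_acc A" "\<psi>' = \<psi> @\<^sub>v 0\<^sub>v 1"
      by (auto simp: qa_pad_simps)
    have "x = l * (INF i::nat. (cmod (inner \<psi> (qa_run A w (ns i))))\<^sup>2)"
      unfolding x \<psi>(2) using \<psi>(1) by (rule INF_eq)
    moreover have "inner \<psi> \<psi> = 1"
      using \<psi>'(2) unfolding \<psi>(2) unit .
    ultimately show "x \<in> (\<lambda>x. l * x) ` fND_set A w"
      using \<psi>(1) ns by (blast intro: fND_setI)
  next
    fix x assume "x \<in> (\<lambda>x. l * x) ` fND_set A w"
    then obtain y where y: "y \<in> fND_set A w" and x: "x = l * y"
      by blast
    obtain \<psi> ns where y_eq: "y = (INF i::nat. (cmod (inner \<psi> (qa_run A w (ns i))))\<^sup>2)"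
      and \<psi>: "\<psi> \<in> qa_acc A" "inner \<psi> \<psi> = 1" and ns: "strict_mono ns"
      using y by (rule fND_setE)
    have acc: "\<psi> @\<^sub>v 0\<^sub>v 1 \<in> qa_acc ?B"
      using \<psi>(1) by (auto simp: qa_pad_simps)
    have "inner (\<psi> @\<^sub>v 0\<^sub>v 1) (\<psi> @\<^sub>v 0\<^sub>v 1) = 1"
      using \<psi>(2) unfolding unit .
    moreover have "x = (INF i::nat. (cmod (inner (\<psi> @\<^sub>v 0\<^sub>v 1) (qa_run ?B w (ns i))))\<^sup>2)"
      unfolding x y_eq by (rule INF_eq[OF \<psi>(1), symmetric])
    ultimately show "x \<in> fND_set ?B w"
      using fND_setI[OF acc _ ns] by simp
  qed
qed

lemma fND_qa_pad_zero:
  assumes A: "qaut_wf A" and l: "0 \<le> l"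
  shows "fND (qa_pad A l {0\<^sub>v 1}) w = l * fND A w"
  using cSup_mult_left[OF l _ bdd_above_fND_set[OF A]]
  unfolding fND_def fND_set_qa_pad_zero[OF A l] by simp

lemma fND_set_qa_pad_full_contains:
  assumes A: "qaut_wf A" and l: "l \<le> 1"
  shows "1 - l \<in> fND_set (qa_pad A l (carrier_vec 1)) w"
proof -
  let ?B = "qa_pad A l (carrier_vec 1)"
  define \<psi> where "\<psi> = 0\<^sub>v (qa_dim A) @\<^sub>v vec 1 (\<lambda>_. 1 :: complex)"
  have \<psi>_acc: "\<psi> \<in> qa_acc ?B"
    using A unfolding \<psi>_def qa_pad_simps qaut_wf_def is_subspace_def by (blast intro: vec_carrier)
  have \<psi>_unit: "inner \<psi> \<psi> = 1"
    unfolding \<psi>_def inner_self_eq_1_iff sq_norm_vec_append_vec by (simp add: sq_norm_vec_def)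
  have "(cmod (inner \<psi> (qa_run ?B w k)))\<^sup>2 = 1 - l" for k
    unfolding \<psi>_def using l inner_zero_left[OF qa_run_carrier[OF A]]
    by (subst inner_qa_run_qa_pad[OF A]) auto
  then have "(INF i::nat. (cmod (inner \<psi> (qa_run ?B w (id i))))\<^sup>2) = 1 - l"
    by simp
  then show ?thesis
    using fND_setI[OF \<psi>_acc \<psi>_unit strict_mono_id, of w] by simp
qed

lemma qa_pad_full_overlap_le:
  assumes A: "qaut_wf A" and l: "0 \<le> l" "l \<le> 1"
    and \<psi>: "\<psi> \<in> qa_acc A" "\<psi> \<noteq> 0\<^sub>v (qa_dim A)" and d: "d \<in> carrier_vec 1"
    and unit: "inner (\<psi> @\<^sub>v d) (\<psi> @\<^sub>v d) = 1"
  obtains \<phi> where "\<phi> \<in> qa_acc A" "inner \<phi> \<phi> = 1"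
    "\<And>w k. (cmod (inner (\<psi> @\<^sub>v d) (qa_run (qa_pad A l (carrier_vec 1)) w k)))\<^sup>2
      \<le> l * (cmod (inner \<phi> (qa_run A w k)))\<^sup>2 + (1 - l)"
proof -
  have \<psi>_carrier: "\<psi> \<in> carrier_vec (qa_dim A)"
    using qa_acc_carrier[OF A \<psi>(1)] .
  define a where "a = sq_norm_vec \<psi>"
  have a_d: "a + (cmod (d $ 0))\<^sup>2 = 1"
    using unit d unfolding a_def inner_self_eq_1_iff sq_norm_vec_append_vec by (simp add: sq_norm_vec_def)
  have a_pos: "0 < a"
    using sq_norm_vec_nonneg[of \<psi>] sq_norm_vec_eq_0D[of \<psi>] \<psi>(2) \<psi>_carrier unfolding a_def
    by (metis carrier_vecD order_less_le)
  define \<phi> where "\<phi> = complex_of_real (1 / sqrt a) \<cdot>\<^sub>v \<psi>"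
  have \<phi>_acc: "\<phi> \<in> qa_acc A"
    using A \<psi>(1) unfolding \<phi>_def qaut_wf_def is_subspace_def by blast
  have \<phi>_unit: "inner \<phi> \<phi> = 1"
    using a_pos unfolding \<phi>_def inner_self_eq_1_iff sq_norm_vec_smult a_def[symmetric]
    by (simp add: norm_divide power_divide)
  have \<psi>_eq: "\<psi> = complex_of_real (sqrt a) \<cdot>\<^sub>v \<phi>"
    using a_pos unfolding \<phi>_def by (intro eq_vecI) (auto simp flip: of_real_mult)
  show thesis
  proof (rule that[OF \<phi>_acc \<phi>_unit])
    fix w k
    let ?z = "inner \<phi> (qa_run A w k)"
    have "inner \<psi> (qa_run A w k) = complex_of_real (sqrt a) * ?z"
      unfolding \<psi>_eq inner_smult_left[OF dim_vec_qa_acc_eq_qa_run[OF A \<phi>_acc]] by simp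
    then have "(cmod (inner (\<psi> @\<^sub>v d) (qa_run (qa_pad A l (carrier_vec 1)) w k)))\<^sup>2 =
        (cmod (complex_of_real (sqrt a) * (complex_of_real (sqrt l) * ?z)
          + cnj (d $ 0) * complex_of_real (sqrt (1 - l))))\<^sup>2"
      unfolding inner_qa_run_qa_pad[OF A \<psi>_carrier d] by (simp add: mult.left_commute)
    also have "\<dots> \<le> (a + (cmod (d $ 0))\<^sup>2) * (l * (cmod ?z)\<^sup>2 + (1 - l))"
      using cmod_add_mult_squared_le[of "complex_of_real (sqrt a)" "complex_of_real (sqrt l) * ?z"
          "cnj (d $ 0)" "complex_of_real (sqrt (1 - l))"] a_pos l
      by (simp add: norm_mult power_mult_distrib)
    finally show "(cmod (inner (\<psi> @\<^sub>v d) (qa_run (qa_pad A l (carrier_vec 1)) w k)))\<^sup>2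
        \<le> l * (cmod ?z)\<^sup>2 + (1 - l)"
      unfolding a_d by simp
  qed
qed

lemma fND_set_qa_pad_full_le:
  assumes A: "qaut_wf A" and l: "0 \<le> l" "l \<le> 1"
    and x: "x \<in> fND_set (qa_pad A l (carrier_vec 1)) w"
  shows "x \<le> l * fND A w + (1 - l)"
proof -
  let ?B = "qa_pad A l (carrier_vec 1)"
  obtain \<psi>' ns where x_eq: "x = (INF i::nat. (cmod (inner \<psi>' (qa_run ?B w (ns i))))\<^sup>2)"
    and \<psi>': "\<psi>' \<in> qa_acc ?B" "inner \<psi>' \<psi>' = 1" and ns: "strict_mono ns"
    using x by (rule fND_setE)
  then obtain \<psi> d where \<psi>: "\<psi> \<in> qa_acc A" and d: "d \<in> carrier_vec 1" and \<psi>'_eq: "\<psi>' = \<psi> @\<^sub>v d"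
    by (auto simp: qa_pad_simps)
  have x_le: "x \<le> (cmod (inner (\<psi> @\<^sub>v d) (qa_run ?B w (ns i))))\<^sup>2" for i
    unfolding x_eq \<psi>'_eq by (rule cINF_lower[OF bdd_below_cmod_squared]) simp
  show ?thesis
  proof (cases "\<psi> = 0\<^sub>v (qa_dim A)")
    case True
    have "(cmod (d $ 0))\<^sup>2 = 1"
      using \<psi>'(2) d unfolding \<psi>'_eq True inner_self_eq_1_iff sq_norm_vec_append_vec by (simp add: sq_norm_vec_def)
    then have "(cmod (inner (\<psi> @\<^sub>v d) (qa_run ?B w (ns 0))))\<^sup>2 = 1 - l"
      using inner_qa_run_qa_pad[OF A _ d] inner_zero_left[OF qa_run_carrier[OF A]] l
      unfolding True by (simp add: norm_mult power_mult_distrib)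
    then show ?thesis
      using x_le[of 0] fND_nonneg[OF A, of w] l by (simp add: add_increasing)
  next
    case False
    have unit: "inner (\<psi> @\<^sub>v d) (\<psi> @\<^sub>v d) = 1"
      using \<psi>'(2) unfolding \<psi>'_eq .
    obtain \<phi> where \<phi>: "\<phi> \<in> qa_acc A" "inner \<phi> \<phi> = 1"
      and bound: "\<And>w k. (cmod (inner (\<psi> @\<^sub>v d) (qa_run ?B w k)))\<^sup>2
        \<le> l * (cmod (inner \<phi> (qa_run A w k)))\<^sup>2 + (1 - l)"
      by (rule qa_pad_full_overlap_le[OF A l \<psi> False d unit]) blast
    have "x \<le> (INF i. l * (cmod (inner \<phi> (qa_run A w (ns i))))\<^sup>2 + (1 - l))"
      by (rule cINF_greatest) (auto intro: order_trans[OF x_le bound])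
    also have "\<dots> = l * (INF i. (cmod (inner \<phi> (qa_run A w (ns i))))\<^sup>2) + (1 - l)"
      by (rule cINF_affine[OF l(1) UNIV_not_empty bdd_below_cmod_squared])
    also have "\<dots> \<le> l * fND A w + (1 - l)"
      using fND_upper[OF A fND_setI[OF \<phi> ns]] l by (simp add: mult_left_mono)
    finally show ?thesis .
  qed
qed

lemma qa_pad_full_aligned_state:
  assumes A: "qaut_wf A" and l: "0 \<le> l" "l < 1" and \<phi>: "\<phi> \<in> qa_acc A" "inner \<phi> \<phi> = 1"
  obtains \<psi> where "\<psi> \<in> qa_acc (qa_pad A l (carrier_vec 1))" "inner \<psi> \<psi> = 1"
    "\<And>w k. inner \<psi> (qa_run (qa_pad A l (carrier_vec 1)) w k) =
      (complex_of_real l * cnj L * inner \<phi> (qa_run A w k) + complex_of_real (1 - l)) /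
      complex_of_real (sqrt (l * (cmod L)\<^sup>2 + (1 - l)))"
proof -
  define N where "N = sqrt (l * (cmod L)\<^sup>2 + (1 - l))"
  have N_pos: "0 < N"
    unfolding N_def using l by (simp add: add_nonneg_pos)
  have N_sq: "N\<^sup>2 = l * (cmod L)\<^sup>2 + (1 - l)"
    unfolding N_def using l by simp
  define \<psi> where
    "\<psi> = (complex_of_real (sqrt l / N) * L) \<cdot>\<^sub>v \<phi> @\<^sub>v vec 1 (\<lambda>_. complex_of_real (sqrt (1 - l) / N))"
  show thesis
  proof (rule that)
    have "(complex_of_real (sqrt l / N) * L) \<cdot>\<^sub>v \<phi> \<in> qa_acc A"
      using A \<phi>(1) unfolding qaut_wf_def is_subspace_def by blast
    then show "\<psi> \<in> qa_acc (qa_pad A l (carrier_vec 1))"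
      unfolding \<psi>_def qa_pad_simps by (blast intro: vec_carrier)
    have "sq_norm_vec \<psi> = (l * (cmod L)\<^sup>2 + (1 - l)) / N\<^sup>2"
      using \<phi>(2) l N_pos unfolding \<psi>_def inner_self_eq_1_iff
      by (simp add: sq_norm_vec_append_vec sq_norm_vec_smult sq_norm_vec_const norm_mult norm_divide
          power_mult_distrib power_divide add_divide_distrib)
    then show "inner \<psi> \<psi> = 1"
      using N_pos unfolding inner_self_eq_1_iff by (simp add: N_sq[symmetric])
    fix w k
    let ?s = "qa_run A w k"
    have sqrt_sq: "complex_of_real (sqrt x) * complex_of_real (sqrt x) = complex_of_real x" if "0 \<le> x" for x
      using that by (simp flip: of_real_mult)
    have "inner \<psi> (qa_run (qa_pad A l (carrier_vec 1)) w k) =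
      complex_of_real (sqrt l) * inner ((complex_of_real (sqrt l / N) * L) \<cdot>\<^sub>v \<phi>) ?s
        + complex_of_real (sqrt (1 - l) / N) * complex_of_real (sqrt (1 - l))"
      unfolding \<psi>_def using qa_acc_carrier[OF A \<phi>(1)] by (subst inner_qa_run_qa_pad[OF A]) auto
    also have "\<dots> = (complex_of_real (sqrt l) * complex_of_real (sqrt l) * cnj L * inner \<phi> ?s
        + complex_of_real (sqrt (1 - l)) * complex_of_real (sqrt (1 - l))) / complex_of_real N"
      unfolding inner_smult_left[OF dim_vec_qa_acc_eq_qa_run[OF A \<phi>(1)]]
      by (simp add: add_divide_distrib mult_ac)
    finally show "inner \<psi> (qa_run (qa_pad A l (carrier_vec 1)) w k) =
      (complex_of_real l * cnj L * inner \<phi> ?s + complex_of_real (1 - l)) /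
      complex_of_real (sqrt (l * (cmod L)\<^sup>2 + (1 - l)))"
      using l by (simp add: sqrt_sq N_def)
  qed
qed

lemma tendsto_cmod_aligned_squared:
  fixes z :: "nat \<Rightarrow> complex"
  assumes lim: "z \<longlonglongrightarrow> L" and l: "0 \<le> l" "l < 1"
  defines "N \<equiv> sqrt (l * (cmod L)\<^sup>2 + (1 - l))"
  shows "(\<lambda>j. (cmod ((complex_of_real l * cnj L * z j + complex_of_real (1 - l)) / complex_of_real N))\<^sup>2)
    \<longlonglongrightarrow> l * (cmod L)\<^sup>2 + (1 - l)"
proof -
  define f where "f u = (cmod ((complex_of_real l * cnj L * u + complex_of_real (1 - l)) / complex_of_real N))\<^sup>2"
    for u
  have N_pos: "0 < N"
    unfolding N_def using l by (simp add: add_nonneg_pos)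
  have N_sq: "N\<^sup>2 = l * (cmod L)\<^sup>2 + (1 - l)"
    unfolding N_def using l by simp
  have "cnj L * L = complex_of_real ((cmod L)\<^sup>2)"
    by (metis complex_norm_square mult.commute)
  then have "complex_of_real l * cnj L * L + complex_of_real (1 - l) = complex_of_real (N\<^sup>2)"
    unfolding N_sq by (simp only: mult.assoc of_real_add of_real_mult)
  then have "f L = N\<^sup>2"
    unfolding f_def using N_pos by (simp add: norm_divide power2_eq_square)
  moreover have "(\<lambda>j. f (z j)) \<longlonglongrightarrow> f L"
    unfolding f_def using lim N_pos by (intro tendsto_intros) auto
  ultimately show ?thesis
    unfolding f_def N_sq by simp
qed

lemma fND_set_qa_pad_full_approx:
  assumes A: "qaut_wf A" and l: "0 \<le> l" "l < 1" and g: "g \<in> fND_set A w" and e: "0 < e"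
  obtains x where "x \<in> fND_set (qa_pad A l (carrier_vec 1)) w" "l * g + (1 - l) - e \<le> x"
proof -
  let ?B = "qa_pad A l (carrier_vec 1)"
  obtain \<phi> ns where g_eq: "g = (INF i::nat. (cmod (inner \<phi> (qa_run A w (ns i))))\<^sup>2)"
    and \<phi>: "\<phi> \<in> qa_acc A" "inner \<phi> \<phi> = 1" and ns: "strict_mono ns"
    using g by (rule fND_setE)
  define z where "z i = inner \<phi> (qa_run A w (ns i))" for i
  have "cmod (z i) \<le> 1" for i
    using cmod_inner_qa_run_le_1[OF A \<phi>] unfolding z_def by (simp add: power_le_one_iff abs_square_le_1)
  then have "bounded (range z)"
    by (intro boundedI) auto
  then obtain L r where r: "strict_mono r" and lim: "(z \<circ> r) \<longlonglongrightarrow> L" and g_le: "g \<le> (cmod L)\<^sup>2"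
    unfolding g_eq z_def[symmetric] by (rule bounded_convergent_subseq_INF_le)
  obtain \<psi> where \<psi>: "\<psi> \<in> qa_acc ?B" "inner \<psi> \<psi> = 1"
    and overlap: "\<And>w k. inner \<psi> (qa_run ?B w k) =
      (complex_of_real l * cnj L * inner \<phi> (qa_run A w k) + complex_of_real (1 - l)) /
      complex_of_real (sqrt (l * (cmod L)\<^sup>2 + (1 - l)))"
    by (rule qa_pad_full_aligned_state[OF A l \<phi>]) blast
  have "(\<lambda>j. (cmod (inner \<psi> (qa_run ?B w (ns (r j)))))\<^sup>2) \<longlonglongrightarrow> l * (cmod L)\<^sup>2 + (1 - l)"
    using tendsto_cmod_aligned_squared[OF lim l] unfolding overlap z_def comp_def .
  then obtain J where
    J: "l * (cmod L)\<^sup>2 + (1 - l) - e \<le> (INF j. (cmod (inner \<psi> (qa_run ?B w (ns (r (j + J))))))\<^sup>2)"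
    using e by (elim tendsto_imp_INF_shift_ge) auto
  have ns': "strict_mono (\<lambda>j. ns (r (j + J)))"
    using ns r unfolding strict_mono_def by simp
  show thesis
  proof (rule that)
    show "(INF j. (cmod (inner \<psi> (qa_run ?B w (ns (r (j + J))))))\<^sup>2) \<in> fND_set ?B w"
      by (rule fND_setI[OF \<psi> ns'])
    show "l * g + (1 - l) - e \<le> (INF j. (cmod (inner \<psi> (qa_run ?B w (ns (r (j + J))))))\<^sup>2)"
      using J mult_left_mono[OF g_le l(1)] by linarith
  qed
qed

lemma fND_qa_pad_full:
  assumes A: "qaut_wf A" and l: "0 \<le> l" "l < 1"
  shows "fND (qa_pad A l (carrier_vec 1)) w = l * fND A w + (1 - l)"
proof (rule antisym)
  let ?B = "qa_pad A l (carrier_vec 1)"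
  have B: "qaut_wf ?B"
    using A l is_subspace_carrier by (intro qaut_wf_qa_pad) auto
  show "fND ?B w \<le> l * fND A w + (1 - l)"
    using fND_nonneg[OF A] l fND_set_qa_pad_full_le[OF A l(1)]
    by (intro fND_least) (auto simp: add_nonneg_nonneg)
  \<comment> \<open>needed when \<open>fND_set A w = {}\<close>, where \<open>fND A w = 0\<close> by convention\<close>
  have base: "1 - l \<le> fND ?B w"
    using fND_upper[OF B fND_set_qa_pad_full_contains[OF A less_imp_le[OF l(2)]]] .
  have approx: "l * g + (1 - l) \<le> fND ?B w" if g: "g \<in> fND_set A w" for g
  proof (rule field_le_epsilon)
    fix e :: real assume "0 < e"
    then obtain x where "x \<in> fND_set ?B w" "l * g + (1 - l) - e \<le> x"
      using fND_set_qa_pad_full_approx[OF A l g] by blast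
    then show "l * g + (1 - l) \<le> fND ?B w + e"
      using fND_upper[OF B] by fastforce
  qed
  show "l * fND A w + (1 - l) \<le> fND ?B w"
  proof (cases "fND_set A w = {}")
    case True
    then show ?thesis
      using base by (simp add: fND_def)
  next
    case False
    have "l * fND A w = Sup ((\<lambda>x. l * x) ` fND_set A w)"
      using cSup_mult_left[OF l(1) False bdd_above_fND_set[OF A]] False by (simp add: fND_def)
    also have "\<dots> \<le> fND ?B w - (1 - l)"
      using False by (intro cSup_least) (auto dest!: approx)
    finally show ?thesis
      by simp
  qed
qed

lemma fND_qa_pad_trivial:
  assumes "0 \<le> l"
  shows "fND (qa_pad qa_trivial l {0\<^sub>v 1}) w = l"
proof -
  have "fND (qa_pad qa_trivial l {0\<^sub>v 1}) w = l * fND qa_trivial w"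
    by (rule fND_qa_pad_zero[OF qaut_wf_qa_trivial assms])
  then show ?thesis
    by (simp add: fND_qa_trivial)
qed

theorem proposition4:
  fixes dummy :: "'a::finite itself"
  shows "(\<forall>l::real. 0 \<le> l \<and> l \<le> 1 \<longrightarrow>
            (\<exists>A :: 'a qaut. qaut_wf A \<and> (\<forall>w. fND A w = l)))
       \<and> (\<forall>(A :: 'a qaut) (l::real). qaut_wf A \<and> 0 \<le> l \<and> l \<le> 1 \<longrightarrow>
            (\<exists>B :: 'a qaut. qaut_wf B \<and> (\<forall>w. fND B w = l * fND A w)))
       \<and> (\<forall>(A :: 'a qaut) (l::real). qaut_wf A \<and> 0 \<le> l \<and> l \<le> 1 \<longrightarrow>
            (\<exists>B :: 'a qaut. qaut_wf B \<and> (\<forall>w. fND B w = l * fND A w + (1 - l))))"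
proof (intro conjI allI impI; elim conjE)
  fix A :: "'a qaut" and l :: real
  assume A: "qaut_wf A" and l: "0 \<le> l" "l \<le> 1"
  show "\<exists>B :: 'a qaut. qaut_wf B \<and> (\<forall>w. fND B w = l * fND A w)"
    using qaut_wf_qa_pad[OF A l is_subspace_zero] fND_qa_pad_zero[OF A l(1)] by blast
  show "\<exists>B :: 'a qaut. qaut_wf B \<and> (\<forall>w. fND B w = l * fND A w + (1 - l))"
  proof (cases "l = 1")
    case True
    then show ?thesis
      using A by auto
  next
    case False
    then show ?thesis
      using qaut_wf_qa_pad[OF A l is_subspace_carrier] fND_qa_pad_full[OF A l(1)] l(2) by auto
  qed
next
  fix l :: real
  assume l: "0 \<le> l" "l \<le> 1"
  let ?A = "qa_pad (qa_trivial :: 'a qaut) l {0\<^sub>v 1}"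
  have "qaut_wf ?A"
    using qaut_wf_qa_trivial l is_subspace_zero by (rule qaut_wf_qa_pad)
  moreover have "fND ?A w = l" for w
    by (rule fND_qa_pad_trivial[OF l(1)])
  ultimately show "\<exists>A :: 'a qaut. qaut_wf A \<and> (\<forall>w. fND A w = l)"
    by blast
qed

end
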